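(* Let $N\ge2$, $M=2^N$, and let $\mathcal{A}=\{a_0,\dots,a_{M-1}\}$ be a Gray-labelled rectangular $M$-QAM constellation (defined in the context), with $N_I=\lceil N/2\rceil$ in-phase bit positions $\mathcal{N}_I=\{0,\dots,N_I-1\}$ and quadrature bit positions $\mathcal{N}_Q=\{N_I,\dots,N-1\}$. For $y,h\in\mathbb{C}$ let $d_i=|y-ha_i|^2$ and let $f=\sum_{S}\bar d_S\prod_{n\in S}z_n$ be the associated pseudo-Boolean function. Then: (1) for every $S\subseteq\{0,\dots,N-1\}$ with $S\cap\mathcal{N}_I\neq\emptyset$ and $S\cap\mathcal{N}_Q\neq\emptyset$, one has $\bar d_S=0$ for all $y,h\in\mathbb{C}$; (2) the degree of $f$, i.e. the largest $|S|$ such that $\bar d_S$ is not identically zero as a function of $(y,h)\in\mathbb{C}^2$, equals $N_I=\lceil N/2\rceil$.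
   Context: For $i\in\{0,\dots,M-1\}$ write its $N$-bit binary representation as $b_0(i)\cdots b_{N-1}(i)$ with $b_0$ the most significant bit. Given $d_0,\dots,d_{M-1}$, define $f(z_0,\dots,z_{N-1})=\sum_{i}d_i\prod_{n=0}^{N-1}B_{i,n}(z_n)$, $z_n\in\{0,1\}$, with $B_{i,n}(z)=z$ if $b_n(i)=1$ and $1-z$ if $b_n(i)=0$; its multilinear expansion is $f=\sum_{S\subseteq\{0,\dots,N-1\}}\bar d_S\prod_{n\in S}z_n$ with $\bar d_S=\sum_{i:\,b_n(i)=0\ \forall n\notin S}d_i\prod_{n\in S}(-1)^{1-b_n(i)}$. Gray-labelled rectangular $M$-QAM: let $N_Q=\lfloor N/2\rfloor$. Let $g_I:\{0,\dots,2^{N_I}-1\}\to\{0,1\}^{N_I}$ and $g_Q:\{0,\dots,2^{N_Q}-1\}\to\{0,1\}^{N_Q}$ be bijections such that consecutive values $g_I(u),g_I(u+1)$ differ in exactly one coordinate, and likewise for $g_Q$. With $c>0$ set $x_u=c(2u+1-2^{N_I})$, $y_v=c(2v+1-2^{N_Q})$. The point $a_i$ whose in-phase bits $b_0(i)\cdots b_{N_I-1}(i)$ equal $g_I(u)$ and whose quadrature bits $b_{N_I}(i)\cdots b_{N-1}(i)$ equal $g_Q(v)$ is $a_i=x_u+j\,y_v$ ($j=\sqrt{-1}$). *)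

theory Defs
  imports Complex_Main
begin

text \<open>n-th bit (n = 0 is the most significant) of the N-bit binary representation of i.\<close>
definition bitMS :: "nat \<Rightarrow> nat \<Rightarrow> nat \<Rightarrow> nat" where
  "bitMS N i n = (i div 2 ^ (N - 1 - n)) mod 2"

definition dbar :: "nat \<Rightarrow> (nat \<Rightarrow> real) \<Rightarrow> nat set \<Rightarrow> real" where
  "dbar N d S = (\<Sum>i\<in>{i. i < 2 ^ N \<and> (\<forall>n<N. n \<notin> S \<longrightarrow> bitMS N i n = 0)}.
                    d i * (\<Prod>n\<in>S. (-1) ^ (1 - bitMS N i n)))"

definition pb_degree :: "nat \<Rightarrow> ('p \<Rightarrow> nat \<Rightarrow> real) \<Rightarrow> nat" where
  "pb_degree N D = Max {card S | S. S \<subseteq> {..<N} \<and> (\<exists>p. dbar N (D p) S \<noteq> 0)}"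

definition bitvecs :: "nat \<Rightarrow> nat list set" where
  "bitvecs K = {xs. length xs = K \<and> set xs \<subseteq> {0, 1}}"

definition gray_map :: "nat \<Rightarrow> (nat \<Rightarrow> nat list) \<Rightarrow> bool" where
  "gray_map K g \<longleftrightarrow> bij_betw g {..<2 ^ K} (bitvecs K) \<and>
     (\<forall>u. u + 1 < 2 ^ K \<longrightarrow> card {k. k < K \<and> g u ! k \<noteq> g (u + 1) ! k} = 1)"

definition gray_qam :: "nat \<Rightarrow> real \<Rightarrow> (nat \<Rightarrow> nat list) \<Rightarrow> (nat \<Rightarrow> nat list) \<Rightarrow> (nat \<Rightarrow> complex) \<Rightarrow> bool" where
  "gray_qam N c gI gQ a \<longleftrightarrow>
     (let NQ = N div 2; NI = N - NQ in
      c > 0 \<and> gray_map NI gI \<and> gray_map NQ gQ \<and>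
      (\<forall>i < 2 ^ N. \<forall>u < 2 ^ NI. \<forall>v < 2 ^ NQ.
         map (bitMS N i) [0..<NI] = gI u \<and> map (bitMS N i) [NI..<N] = gQ v \<longrightarrow>
         a i = Complex (c * (2 * real u + 1 - 2 ^ NI)) (c * (2 * real v + 1 - 2 ^ NQ))))"

end

theory Submission
  imports Defs
begin

(*
  Since a_i = x(in-phase bits of i) + j y(quadrature bits of i), the distance |y - h a_i|^2
  is a function of the in-phase bits plus a function of the quadrature bits. A coefficient
  bar d_S of a function that ignores some bit n in S vanishes, because flipping bit n pairs
  up its summands with opposite signs; this kills every mixed S and bounds the degree by
  max(N_I, N_Q) = N_I. For the lower bound, the difference of the distances at
  (y, h) = (1, 1) and (-1, 1) is -4 Re a_i. Its coefficient at the N_I in-phase positions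
  is a signed sum over all in-phase labels; along a Gray code the sign of the label of
  level u alternates with u, so the sum is +-c Sum_u (-1)^u (2u + 1 - 2^N_I) = -+c 2^N_I,
  which is nonzero.
*)

lemma bitMS_eq_bit: "bitMS N i n = of_bool (bit i (N - 1 - n))"
  by (simp add: bitMS_def bit_iff_odd odd_iff_mod_2_eq_one)

lemma bitMS_flip_bit:
  "m < N \<Longrightarrow> n < N \<Longrightarrow>
     bitMS N (flip_bit (N - 1 - n) i) m = (if m = n then 1 - bitMS N i m else bitMS N i m)"
  by (auto simp: bitMS_eq_bit bit_simps)

lemma flip_bit_less_power: "(i::nat) < 2 ^ N \<Longrightarrow> e < N \<Longrightarrow> flip_bit e i < 2 ^ N"
  by (metis take_bit_flip_bit_eq take_bit_nat_eq_self_iff not_le)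

lemma bitMS_inject:
  assumes "i < 2 ^ N" "j < 2 ^ N" "\<And>n. n < N \<Longrightarrow> bitMS N i n = bitMS N j n"
  shows "i = j"
proof (rule bit_eqI)
  fix k
  show "bit i k \<longleftrightarrow> bit j k"
  proof (cases "k < N")
    case True
    then have "N - 1 - (N - 1 - k) = k" by simp
    then show ?thesis using assms(3)[of "N - 1 - k"] True
      by (simp add: bitMS_eq_bit of_bool_eq_iff)
  next
    case False
    then show ?thesis using assms(1,2)
      by (metis bit_take_bit_iff take_bit_nat_eq_self_iff)
  qed
qed

lemma map_bitMS_in_bitvecs: "map (bitMS N i) ns \<in> bitvecs (length ns)"
  by (auto simp: bitvecs_def bitMS_eq_bit)

lemma finite_bitvecs: "finite (bitvecs K)"
  and card_bitvecs: "card (bitvecs K) = 2 ^ K"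
proof -
  have "bitvecs K = {xs. set xs \<subseteq> {0, 1} \<and> length xs = K}"
    unfolding bitvecs_def by blast
  then show "finite (bitvecs K)" "card (bitvecs K) = 2 ^ K"
    by (simp_all add: finite_lists_length_eq card_lists_length_eq numeral_2_eq_2)
qed

lemma bij_betw_leading_bits:
  assumes "K \<le> N"
  shows "bij_betw (\<lambda>i. map (bitMS N i) [0..<K])
           {i. i < 2 ^ N \<and> (\<forall>n<N. n \<notin> {..<K} \<longrightarrow> bitMS N i n = 0)} (bitvecs K)"
    (is "bij_betw ?B ?I _")
proof -
  have inj: "inj_on ?B ?I"
  proof (rule inj_onI)
    fix i j assume "i \<in> ?I" "j \<in> ?I" "?B i = ?B j"
    then show "i = j"
      by (intro bitMS_inject[of i N j]) (auto simp: not_less)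
  qed
  have pushed: "push_bit (N - K) p \<in> ?I" if "p < 2 ^ K" for p
  proof -
    have "push_bit (N - K) p < 2 ^ K * 2 ^ (N - K)"
      using that by (simp add: push_bit_eq_mult)
    moreover have "\<not> bit (push_bit (N - K) p) (N - 1 - n)" if "K \<le> n" "n < N" for n
      using that by (auto simp: bit_push_bit_iff)
    ultimately show ?thesis
      using assms by (auto simp: bitMS_eq_bit simp flip: power_add)
  qed
  have "card (bitvecs K) = card (push_bit (N - K) ` {..<2 ^ K} :: nat set)"
    by (simp add: card_bitvecs card_image inj_on_def push_bit_eq_mult)
  also have "\<dots> \<le> card ?I"
    using pushed by (intro card_mono) auto
  also have "\<dots> = card (?B ` ?I)"
    using inj by (simp add: card_image)
  finally have "?B ` ?I = bitvecs K"
    using map_bitMS_in_bitvecs[of N _ "[0..<K]"]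
    by (intro card_seteq[OF finite_bitvecs]) auto
  with inj show ?thesis unfolding bij_betw_def by blast
qed

lemma dbar_cong: "(\<And>i. i < 2 ^ N \<Longrightarrow> d i = d' i) \<Longrightarrow> dbar N d S = dbar N d' S"
  unfolding dbar_def by (intro sum.cong) auto

lemma dbar_add: "dbar N (\<lambda>i. d i + d' i) S = dbar N d S + dbar N d' S"
  unfolding dbar_def by (simp add: distrib_right sum.distrib)

lemma dbar_diff: "dbar N (\<lambda>i. d i - d' i) S = dbar N d S - dbar N d' S"
  unfolding dbar_def by (simp add: left_diff_distrib sum_subtractf)

lemma dbar_cmult: "dbar N (\<lambda>i. x * d i) S = x * dbar N d S"
  unfolding dbar_def by (simp add: sum_distrib_left mult.assoc)

lemma dbar_eq_0_if_flip_invariant: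
  assumes "n \<in> S" "S \<subseteq> {..<N}"
    and invariant: "\<And>i. i < 2 ^ N \<Longrightarrow> d (flip_bit (N - 1 - n) i) = d i"
  shows "dbar N d S = 0"
proof -
  define flip :: "nat \<Rightarrow> nat" where "flip = flip_bit (N - 1 - n)"
  define A where "A = {i. i < 2 ^ N \<and> (\<forall>m<N. m \<notin> S \<longrightarrow> bitMS N i m = 0)}"
  define f where "f i = d i * (\<Prod>m\<in>S. (-1::real) ^ (1 - bitMS N i m))" for i
  have "n < N" "finite S" using assms(1,2) finite_subset by auto
  have flip_flip: "flip (flip i) = i" for i
    unfolding flip_def by (rule bit_eqI) (auto simp: bit_simps)
  have bits_flip: "bitMS N (flip i) m = (if m = n then 1 - bitMS N i m else bitMS N i m)"
    if "m \<in> S" for i m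
    using bitMS_flip_bit \<open>n < N\<close> that assms(2) unfolding flip_def by blast
  have flip_A: "flip i \<in> A" if "i \<in> A" for i
    using that assms(1) bitMS_flip_bit \<open>n < N\<close> flip_bit_less_power
    unfolding A_def flip_def by (auto simp del: diff_diff_left)
  have flip_f: "f (flip i) = - f i" if "i \<in> A" for i
  proof -
    have "bitMS N i n \<in> {0, 1}" by (simp add: bitMS_eq_bit)
    then have "(-1::real) ^ (1 - bitMS N (flip i) n) = - ((-1) ^ (1 - bitMS N i n))"
      using bits_flip[OF assms(1)] by auto
    moreover have "(\<Prod>m\<in>S - {n}. (-1::real) ^ (1 - bitMS N (flip i) m))
        = (\<Prod>m\<in>S - {n}. (-1) ^ (1 - bitMS N i m))"
      using bits_flip by (intro prod.cong) auto
    moreover have "d (flip i) = d i" using invariant that unfolding A_def flip_def by simp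
    ultimately show ?thesis
      unfolding f_def prod.remove[OF \<open>finite S\<close> assms(1)] by simp
  qed
  have "sum f A = sum (\<lambda>i. f (flip i)) A"
    by (rule sum.reindex_bij_witness[where i = flip and j = flip]) (auto simp: flip_flip flip_A)
  also have "\<dots> = - sum f A" using flip_f by (simp add: sum_negf)
  finally have "sum f A = 0" by simp
  then show ?thesis unfolding dbar_def A_def f_def .
qed

(* The bound on ns matters: by truncated subtraction, bitMS N i m reads bit 0 of i
   for every m \<ge> N - 1. *)
lemma dbar_fun_of_bits_eq_0:
  assumes "S \<subseteq> {..<N}" "set ns \<subseteq> {..<N}" "\<not> S \<subseteq> set ns"
  shows "dbar N (\<lambda>i. F (map (bitMS N i) ns)) S = 0"
proof -
  obtain n where n: "n \<in> S" "n \<notin> set ns" using assms(3) by blast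
  have "bitMS N (flip_bit (N - 1 - n) i) m = bitMS N i m" if "m \<in> set ns" for i m
    using that n assms(1,2) by (subst bitMS_flip_bit) auto
  then have labels_eq: "map (bitMS N (flip_bit (N - 1 - n) i)) ns = map (bitMS N i) ns" for i
    by (simp cong: map_cong)
  show ?thesis by (rule dbar_eq_0_if_flip_invariant[OF n(1) assms(1)]) (simp only: labels_eq)
qed

lemma dbar_separable_eq_0:
  assumes "S \<subseteq> {..<N}" "K \<le> N" "S \<inter> {..<K} \<noteq> {}" "S \<inter> {K..<N} \<noteq> {}"
  shows "dbar N (\<lambda>i. F (map (bitMS N i) [0..<K]) + G (map (bitMS N i) [K..<N])) S = 0"
proof -
  have "dbar N (\<lambda>i. F (map (bitMS N i) [0..<K])) S = 0"
    by (rule dbar_fun_of_bits_eq_0) (use assms in auto)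
  moreover have "dbar N (\<lambda>i. G (map (bitMS N i) [K..<N])) S = 0"
    by (rule dbar_fun_of_bits_eq_0) (use assms in auto)
  ultimately show ?thesis by (simp add: dbar_add)
qed

definition bits_sign :: "nat list \<Rightarrow> real" where
  "bits_sign w = (\<Prod>k<length w. (-1) ^ (1 - w ! k))"

lemma dbar_leading_bits:
  assumes "K \<le> N"
  shows "dbar N (\<lambda>i. F (map (bitMS N i) [0..<K])) {..<K} = (\<Sum>w\<in>bitvecs K. F w * bits_sign w)"
proof -
  have "bits_sign (map (bitMS N i) [0..<K]) = (\<Prod>n<K. (-1) ^ (1 - bitMS N i n))" for i
    unfolding bits_sign_def by (intro prod.cong) auto
  then show ?thesis
    unfolding dbar_def by (simp flip: sum.reindex_bij_betw[OF bij_betw_leading_bits[OF assms]])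
qed

lemma gray_map_bits_sign_Suc:
  assumes g: "gray_map K g" and u: "Suc u < 2 ^ K"
  shows "bits_sign (g (Suc u)) = - bits_sign (g u)"
proof -
  have "g u \<in> bitvecs K" "g (Suc u) \<in> bitvecs K"
    using g u unfolding gray_map_def bij_betw_def by auto
  then have len: "length (g u) = K" "length (g (Suc u)) = K"
    and sets: "set (g u) \<subseteq> {0, 1}" "set (g (Suc u)) \<subseteq> {0, 1}"
    unfolding bitvecs_def by auto
  have "card {k. k < K \<and> g u ! k \<noteq> g (Suc u) ! k} = 1"
    using g u unfolding gray_map_def by simp
  then obtain k where k: "{k. k < K \<and> g u ! k \<noteq> g (Suc u) ! k} = {k}"
    by (rule card_1_singletonE)
  then have "k \<in> {..<K}" and differ: "g u ! k \<noteq> g (Suc u) ! k" by auto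
  then have "g u ! k \<in> set (g u)" "g (Suc u) ! k \<in> set (g (Suc u))" using len by simp_all
  with sets have "g u ! k \<in> {0, 1}" "g (Suc u) ! k \<in> {0, 1}" by blast+
  with differ have "(-1::real) ^ (1 - g (Suc u) ! k) = - ((-1) ^ (1 - g u ! k))"
    by auto
  moreover have "g (Suc u) ! n = g u ! n" if "n \<in> {..<K} - {k}" for n
  proof (rule ccontr)
    assume "g (Suc u) ! n \<noteq> g u ! n"
    with that have "n \<in> {k. k < K \<and> g u ! k \<noteq> g (Suc u) ! k}" by auto
    with that show False unfolding k by simp
  qed
  then have "(\<Prod>n\<in>{..<K} - {k}. (-1::real) ^ (1 - g (Suc u) ! n))
      = (\<Prod>n\<in>{..<K} - {k}. (-1) ^ (1 - g u ! n))"
    by (intro prod.cong) simp_all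
  ultimately show ?thesis
    unfolding bits_sign_def len prod.remove[OF finite_lessThan \<open>k \<in> {..<K}\<close>] by simp
qed

lemma gray_map_bits_sign:
  "gray_map K g \<Longrightarrow> u < 2 ^ K \<Longrightarrow> bits_sign (g u) = (-1) ^ u * bits_sign (g 0)"
  by (induction u) (simp_all add: gray_map_bits_sign_Suc)

lemma gray_map_inv_into:
  assumes "gray_map K g" "w \<in> bitvecs K"
  shows "inv_into {..<2 ^ K} g w < 2 ^ K" "g (inv_into {..<2 ^ K} g w) = w"
  using assms bij_betw_inv_into_right[of g] inv_into_into[of w g "{..<2 ^ K}"]
  unfolding gray_map_def bij_betw_def by auto

definition pam_level :: "real \<Rightarrow> nat \<Rightarrow> (nat \<Rightarrow> nat list) \<Rightarrow> nat list \<Rightarrow> real" where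
  "pam_level c K g w = c * (2 * real (inv_into {..<2 ^ K} g w) + 1 - 2 ^ K)"

lemma pam_level_gray_map:
  "gray_map K g \<Longrightarrow> u < 2 ^ K \<Longrightarrow> pam_level c K g (g u) = c * (2 * real u + 1 - 2 ^ K)"
  unfolding gray_map_def pam_level_def bij_betw_def by simp

lemma sum_alternating_linear: "(\<Sum>u<2 * m. (-1::real) ^ u * (2 * real u + b)) = - 2 * real m"
proof (induction m)
  case (Suc m)
  have "2 * Suc m = Suc (Suc (2 * m))" by simp
  then show ?case using Suc by (simp add: algebra_simps)
qed simp

lemma dbar_pam_level_leading_bits:
  assumes g: "gray_map K g" and "1 \<le> K" "K \<le> N"
  shows "dbar N (\<lambda>i. pam_level c K g (map (bitMS N i) [0..<K])) {..<K}
           = - c * 2 ^ K * bits_sign (g 0)"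
proof -
  have bij: "bij_betw g {..<2 ^ K} (bitvecs K)" using g unfolding gray_map_def by simp
  obtain m where m: "K = Suc m" using \<open>1 \<le> K\<close> by (cases K) auto
  have "dbar N (\<lambda>i. pam_level c K g (map (bitMS N i) [0..<K])) {..<K}
      = (\<Sum>w\<in>bitvecs K. pam_level c K g w * bits_sign w)"
    using \<open>K \<le> N\<close> by (rule dbar_leading_bits)
  also have "\<dots> = (\<Sum>u<2 ^ K. pam_level c K g (g u) * bits_sign (g u))"
    by (rule sum.reindex_bij_betw[OF bij, symmetric])
  also have "\<dots> = (\<Sum>u<2 ^ K. c * bits_sign (g 0) * ((-1) ^ u * (2 * real u + (1 - 2 ^ K))))"
  proof (rule sum.cong)
    fix u :: nat assume u: "u \<in> {..<2 ^ K}"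
    have "bits_sign (g u) = (-1) ^ u * bits_sign (g 0)"
      using g u by (intro gray_map_bits_sign) simp_all
    with u show "pam_level c K g (g u) * bits_sign (g u)
        = c * bits_sign (g 0) * ((-1) ^ u * (2 * real u + (1 - 2 ^ K)))"
      by (simp add: pam_level_gray_map[OF g])
  qed simp
  also have "\<dots> = c * bits_sign (g 0) * (\<Sum>u<2 ^ K. (-1) ^ u * (2 * real u + (1 - 2 ^ K)))"
    by (simp add: sum_distrib_left)
  also have "\<dots> = - c * 2 ^ K * bits_sign (g 0)"
    unfolding m power_Suc sum_alternating_linear by simp
  finally show ?thesis .
qed

lemma gray_qam_eq_Complex:
  assumes "gray_qam N c gI gQ a" "i < 2 ^ N"
  shows "a i = Complex (pam_level c (N - N div 2) gI (map (bitMS N i) [0..<N - N div 2]))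
                       (pam_level c (N div 2) gQ (map (bitMS N i) [N - N div 2..<N]))"
proof -
  define K where "K = N - N div 2"
  define L where "L = N div 2"
  define wI where "wI = map (bitMS N i) [0..<K]"
  define wQ where "wQ = map (bitMS N i) [K..<N]"
  have gray: "gray_map K gI" "gray_map L gQ"
    and levels: "\<And>u v. u < 2 ^ K \<Longrightarrow> v < 2 ^ L \<Longrightarrow> wI = gI u \<Longrightarrow> wQ = gQ v \<Longrightarrow>
        a i = Complex (c * (2 * real u + 1 - 2 ^ K)) (c * (2 * real v + 1 - 2 ^ L))"
    using assms unfolding gray_qam_def Let_def K_def L_def wI_def wQ_def by auto
  have "wI \<in> bitvecs K" "wQ \<in> bitvecs L"
    using map_bitMS_in_bitvecs[of N i "[0..<K]"] map_bitMS_in_bitvecs[of N i "[K..<N]"]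
    unfolding wI_def wQ_def K_def L_def by simp_all
  with gray show ?thesis
    using levels[of "inv_into {..<2 ^ K} gI wI" "inv_into {..<2 ^ L} gQ wQ"]
    unfolding pam_level_def K_def L_def wI_def wQ_def by (simp add: gray_map_inv_into)
qed

lemma cmod_diff_mult_Complex_power2:
  "(cmod (y - h * Complex X Y))\<^sup>2 =
     ((cmod y)\<^sup>2 + (cmod h)\<^sup>2 * X\<^sup>2 - 2 * (Re y * Re h + Im y * Im h) * X)
   + ((cmod h)\<^sup>2 * Y\<^sup>2 + 2 * (Re y * Im h - Im y * Re h) * Y)"
  unfolding cmod_power2 by (simp add: power2_eq_square algebra_simps)

lemma cmod_one_minus_power2_diff: "(cmod (1 - z))\<^sup>2 - (cmod (-1 - z))\<^sup>2 = - 4 * Re z"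
  unfolding cmod_power2 by (simp add: power2_eq_square algebra_simps)

lemma gray_qam_dbar_mixed_eq_0:
  assumes "gray_qam N c gI gQ a" "S \<subseteq> {..<N}"
    and "S \<inter> {..<N - N div 2} \<noteq> {}" "S \<inter> {N - N div 2..<N} \<noteq> {}"
  shows "dbar N (\<lambda>i. (cmod (y - h * a i))\<^sup>2) S = 0"
proof -
  define K where "K = N - N div 2"
  define X where "X = pam_level c K gI"
  define Y where "Y = pam_level c (N div 2) gQ"
  have "dbar N (\<lambda>i. (cmod (y - h * a i))\<^sup>2) S
      = dbar N (\<lambda>i.
          (\<lambda>w. (cmod y)\<^sup>2 + (cmod h)\<^sup>2 * (X w)\<^sup>2 - 2 * (Re y * Re h + Im y * Im h) * X w)
            (map (bitMS N i) [0..<K]) +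
          (\<lambda>w. (cmod h)\<^sup>2 * (Y w)\<^sup>2 + 2 * (Re y * Im h - Im y * Re h) * Y w)
            (map (bitMS N i) [K..<N])) S"
    by (rule dbar_cong)
      (simp add: gray_qam_eq_Complex[OF assms(1)] cmod_diff_mult_Complex_power2 K_def X_def Y_def)
  also have "\<dots> = 0"
    by (rule dbar_separable_eq_0) (use assms in \<open>auto simp: K_def\<close>)
  finally show ?thesis .
qed

lemma gray_qam_dbar_in_phase_ne_0:
  assumes "gray_qam N c gI gQ a" "1 \<le> N"
  shows "\<exists>y h. dbar N (\<lambda>i. (cmod (y - h * a i))\<^sup>2) {..<N - N div 2} \<noteq> 0"
proof (rule ccontr)
  define K where "K = N - N div 2"
  have "c > 0" and gray: "gray_map K gI"
    using assms(1) unfolding gray_qam_def Let_def K_def by auto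
  assume "\<nexists>y h. dbar N (\<lambda>i. (cmod (y - h * a i))\<^sup>2) {..<N - N div 2} \<noteq> 0"
  then have "dbar N (\<lambda>i. (cmod (1 - 1 * a i))\<^sup>2) {..<K} = 0"
    and "dbar N (\<lambda>i. (cmod (-1 - 1 * a i))\<^sup>2) {..<K} = 0"
    unfolding K_def by blast+
  then have "dbar N (\<lambda>i. (cmod (1 - a i))\<^sup>2 - (cmod (-1 - a i))\<^sup>2) {..<K} = 0"
    by (simp add: dbar_diff)
  moreover have "dbar N (\<lambda>i. (cmod (1 - a i))\<^sup>2 - (cmod (-1 - a i))\<^sup>2) {..<K}
      = - 4 * dbar N (\<lambda>i. pam_level c K gI (map (bitMS N i) [0..<K])) {..<K}"
    unfolding cmod_one_minus_power2_diff dbar_cmult[symmetric]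
    by (rule dbar_cong) (simp add: gray_qam_eq_Complex[OF assms(1)] K_def)
  moreover have "dbar N (\<lambda>i. pam_level c K gI (map (bitMS N i) [0..<K])) {..<K}
      = - c * 2 ^ K * bits_sign (gI 0)"
    using gray assms(2) by (intro dbar_pam_level_leading_bits) (auto simp: K_def)
  ultimately show False
    using \<open>c > 0\<close> by (simp add: bits_sign_def)
qed

lemma card_le_max_if_unmixed:
  assumes "S \<subseteq> {..<N}" "\<not> (S \<inter> {..<K} \<noteq> {} \<and> S \<inter> {K..<N} \<noteq> {})"
  shows "card S \<le> max K (N - K)"
proof -
  from assms(2) have "S \<inter> {..<K} = {} \<or> S \<inter> {K..<N} = {}" by blast
  with assms(1) have "S \<subseteq> {K..<N} \<or> S \<subseteq> {..<K}"
    by (auto simp: subset_iff disjoint_iff not_less)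
  then show ?thesis
    by (metis card_lessThan card_atLeastLessThan card_mono finite_atLeastLessThan
        finite_lessThan max.coboundedI1 max.coboundedI2)
qed

lemma pb_degree_eqI:
  assumes "\<And>S p. S \<subseteq> {..<N} \<Longrightarrow> dbar N (D p) S \<noteq> 0 \<Longrightarrow> card S \<le> k"
    and "S \<subseteq> {..<N}" "card S = k" "dbar N (D p) S \<noteq> 0"
  shows "pb_degree N D = k"
  unfolding pb_degree_def
proof (rule Max_eqI)
  have "{card S |S. S \<subseteq> {..<N} \<and> (\<exists>p. dbar N (D p) S \<noteq> 0)} \<subseteq> card ` Pow {..<N}"
    by auto
  then show "finite {card S |S. S \<subseteq> {..<N} \<and> (\<exists>p. dbar N (D p) S \<noteq> 0)}"
    by (rule finite_subset) simp
qed (use assms in auto)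

lemma nat_ceiling_half: "nat \<lceil>real N / 2\<rceil> = N - N div 2"
proof -
  have "\<lceil>real N / 2\<rceil> = - (- int N div 2)"
    using ceiling_divide_eq_div[of "int N" 2, where 'a=real] by simp
  also have "\<dots> = int (N - N div 2)" by presburger
  finally show ?thesis by simp
qed

theorem theorem2:
  fixes N :: nat and c :: real and gI gQ :: "nat \<Rightarrow> nat list" and a :: "nat \<Rightarrow> complex"
  assumes "N \<ge> 2"
    and "gray_qam N c gI gQ a"
  defines "NI \<equiv> nat \<lceil>real N / 2\<rceil>"
  shows "(\<forall>S. S \<subseteq> {..<N} \<and> S \<inter> {..<NI} \<noteq> {} \<and> S \<inter> {NI..<N} \<noteq> {} \<longrightarrow>
            (\<forall>y h. dbar N (\<lambda>i. (cmod (y - h * a i))\<^sup>2) S = 0))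
       \<and> pb_degree N (\<lambda>(y, h) i. (cmod (y - h * a i))\<^sup>2) = NI"
proof -
  have NI: "NI = N - N div 2" unfolding NI_def by (rule nat_ceiling_half)
  have mixed: "dbar N (\<lambda>i. (cmod (y - h * a i))\<^sup>2) S = 0"
    if "S \<subseteq> {..<N}" "S \<inter> {..<NI} \<noteq> {}" "S \<inter> {NI..<N} \<noteq> {}" for S y h
    using gray_qam_dbar_mixed_eq_0[OF assms(2)] that unfolding NI by blast
  obtain y h where top: "dbar N (\<lambda>i. (cmod (y - h * a i))\<^sup>2) {..<NI} \<noteq> 0"
    using gray_qam_dbar_in_phase_ne_0[OF assms(2)] assms(1) unfolding NI by auto
  have "pb_degree N (\<lambda>(y, h) i. (cmod (y - h * a i))\<^sup>2) = NI"
  proof (rule pb_degree_eqI[where S = "{..<NI}" and p = "(y, h)"])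
    fix S and p :: "complex \<times> complex"
    assume "S \<subseteq> {..<N}" "dbar N ((\<lambda>(y, h) i. (cmod (y - h * a i))\<^sup>2) p) S \<noteq> 0"
    then have "card S \<le> max NI (N - NI)"
      using mixed by (intro card_le_max_if_unmixed) (auto split: prod.splits)
    then show "card S \<le> NI" unfolding NI by simp
  qed (use top NI in auto)
  with mixed show ?thesis by blast
qed

end
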